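(* Let $\mathcal{X}\subseteq\mathbb{R}^d$ with the Euclidean norm, let $\mathcal{H}$ be a class of real-valued functions on $\mathcal{X}$ each of which is $L$-Lipschitz, and let $\mathcal{D}_1,\mathcal{D}_2$ be probability distributions over $\mathcal{X}$. Then for any $h_1,h_2\in\mathcal{H}$, $$\mathcal{W}(\mathcal{D}_1,\mathcal{D}_2)\ge\frac{1}{2L}\,\big|\epsilon_{\mathcal{D}_1}(h_1,h_2)-\epsilon_{\mathcal{D}_2}(h_1,h_2)\big|.$$
   Context: $\epsilon_{\mathcal{D}}(h_1,h_2)=\mathbb{E}_{z\sim\mathcal{D}}|h_1(z)-h_2(z)|$. $\mathcal{W}(P_1,P_2)=\inf_{\gamma\in\Pi(P_1,P_2)}\mathbb{E}_{(x,y)\sim\gamma}\|x-y\|_2$ is the Wasserstein-1 distance, where $\Pi(P_1,P_2)$ is the set of couplings of $P_1$ and $P_2$. *)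

theory Defs
  imports "HOL-Probability.Probability"
begin

definition couplings :: "'a measure \<Rightarrow> 'b measure \<Rightarrow> ('a \<times> 'b) measure set" where
  "couplings P Q = {\<gamma>. sets \<gamma> = sets (P \<Otimes>\<^sub>M Q) \<and> prob_space \<gamma> \<and>
      distr \<gamma> P fst = P \<and> distr \<gamma> Q snd = Q}"

definition wasserstein1 :: "'a::real_normed_vector measure \<Rightarrow> 'a measure \<Rightarrow> ennreal" where
  "wasserstein1 P Q = (INF \<gamma>\<in>couplings P Q. \<integral>\<^sup>+ z. ennreal (norm (fst z - snd z)) \<partial>\<gamma>)"

definition eps :: "'a measure \<Rightarrow> ('a \<Rightarrow> real) \<Rightarrow> ('a \<Rightarrow> real) \<Rightarrow> real" where
  "eps D h1 h2 = (\<integral> z. \<bar>h1 z - h2 z\<bar> \<partial>D)"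

end

theory Submission
  imports Defs
begin

text \<open>For a coupling \<gamma> of D1 and D2, the integrals of f = |h1 - h2| against D1 and D2
  are the integrals of f \<circ> fst and f \<circ> snd against \<gamma>. Since f is 2L-Lipschitz, they differ
  by at most 2L times the transport cost of \<gamma>, and the infimum of these costs is the
  Wasserstein distance. As f need not be integrable (its Bochner integral is then 0), the
  comparison is made between nonnegative integrals; when the transport cost is finite, these
  are either both finite or both infinite.\<close>

lemma lipschitz_on_norm:
  fixes f :: "'a::metric_space \<Rightarrow> 'b::real_normed_vector"
  assumes "C-lipschitz_on X f"
  shows "C-lipschitz_on X (\<lambda>x. norm (f x))"
proof (rule lipschitz_onI)
  show "C \<ge> 0" using lipschitz_on_nonneg[OF assms] .
  fix x y assume "x \<in> X" "y \<in> X"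
  have "dist (norm (f x)) (norm (f y)) \<le> dist (f x) (f y)"
    unfolding dist_real_def dist_norm by (rule norm_triangle_ineq3)
  also have "\<dots> \<le> C * dist x y" using lipschitz_onD[OF assms \<open>x \<in> X\<close> \<open>y \<in> X\<close>] .
  finally show "dist (norm (f x)) (norm (f y)) \<le> C * dist x y" .
qed

lemma borel_measurable_continuous_on_sets_restrict:
  assumes "sets M = sets (restrict_space borel X)" and "continuous_on X g"
  shows "g \<in> borel_measurable M"
  using borel_measurable_continuous_on_restrict[OF assms(2)]
    measurable_cong_sets[OF assms(1) refl] by blast

lemma ennreal_plus_le:
  fixes a b :: real
  assumes "0 \<le> b"
  shows "ennreal (a + b) \<le> ennreal a + ennreal b"
proof (cases "0 \<le> a")
  case False
  then have "ennreal (a + b) \<le> ennreal b" by (intro ennreal_leI) simp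
  then show ?thesis using False by (simp add: ennreal_neg)
qed (simp add: assms)

lemma nn_integral_lipschitz_comp_le:
  fixes f :: "'a::metric_space \<Rightarrow> real"
  assumes lip: "C-lipschitz_on S f"
    and u: "\<And>z. z \<in> space M \<Longrightarrow> u z \<in> S" and v: "\<And>z. z \<in> space M \<Longrightarrow> v z \<in> S"
    and fv: "(\<lambda>z. f (v z)) \<in> borel_measurable M"
    and dist_uv: "(\<lambda>z. dist (u z) (v z)) \<in> borel_measurable M"
  shows "(\<integral>\<^sup>+ z. ennreal (f (u z)) \<partial>M)
    \<le> (\<integral>\<^sup>+ z. ennreal (f (v z)) \<partial>M) + ennreal C * (\<integral>\<^sup>+ z. ennreal (dist (u z) (v z)) \<partial>M)"
proof -
  have C: "C \<ge> 0" using lipschitz_on_nonneg[OF lip] .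
  have pointwise: "ennreal (f (u z)) \<le> ennreal (f (v z)) + ennreal C * ennreal (dist (u z) (v z))"
    if "z \<in> space M" for z
  proof -
    have "f (u z) \<le> f (v z) + C * dist (u z) (v z)"
      using lipschitz_onD[OF lip u[OF that] v[OF that]] by (simp add: dist_real_def)
    then have "ennreal (f (u z)) \<le> ennreal (f (v z) + C * dist (u z) (v z))"
      by (rule ennreal_leI)
    also have "\<dots> \<le> ennreal (f (v z)) + ennreal (C * dist (u z) (v z))"
      using C by (intro ennreal_plus_le) simp
    also have "\<dots> = ennreal (f (v z)) + ennreal C * ennreal (dist (u z) (v z))"
      using C by (simp add: ennreal_mult)
    finally show ?thesis .
  qed
  have "(\<integral>\<^sup>+ z. ennreal (f (u z)) \<partial>M)
      \<le> (\<integral>\<^sup>+ z. ennreal (f (v z)) + ennreal C * ennreal (dist (u z) (v z)) \<partial>M)"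
    using pointwise by (intro nn_integral_mono) auto
  also have "\<dots> = (\<integral>\<^sup>+ z. ennreal (f (v z)) \<partial>M) + ennreal C * (\<integral>\<^sup>+ z. ennreal (dist (u z) (v z)) \<partial>M)"
    using fv dist_uv by (simp add: nn_integral_add nn_integral_cmult)
  finally show ?thesis .
qed

lemma coupling_nn_integral_lipschitz_le:
  fixes f :: "'a::{second_countable_topology, real_normed_vector} \<Rightarrow> real"
  assumes \<gamma>: "\<gamma> \<in> couplings P Q"
    and P: "sets P = sets (restrict_space borel X)" and Q: "sets Q = sets (restrict_space borel X)"
    and lip: "C-lipschitz_on X f"
  shows "(\<integral>\<^sup>+ x. ennreal (f x) \<partial>P)
      \<le> (\<integral>\<^sup>+ x. ennreal (f x) \<partial>Q) + ennreal C * (\<integral>\<^sup>+ z. ennreal (norm (fst z - snd z)) \<partial>\<gamma>)"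
    and "(\<integral>\<^sup>+ x. ennreal (f x) \<partial>Q)
      \<le> (\<integral>\<^sup>+ x. ennreal (f x) \<partial>P) + ennreal C * (\<integral>\<^sup>+ z. ennreal (norm (fst z - snd z)) \<partial>\<gamma>)"
proof -
  have sets_\<gamma>: "sets \<gamma> = sets (P \<Otimes>\<^sub>M Q)" and distr_fst: "distr \<gamma> P fst = P"
    and distr_snd: "distr \<gamma> Q snd = Q"
    using \<gamma> unfolding couplings_def by auto
  have space_\<gamma>: "space \<gamma> = X \<times> X"
    using sets_eq_imp_space_eq[OF sets_\<gamma>] sets_eq_imp_space_eq[OF P] sets_eq_imp_space_eq[OF Q]
    by (simp add: space_pair_measure space_restrict_space)
  have fst: "fst \<in> measurable \<gamma> P" and snd: "snd \<in> measurable \<gamma> Q"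
    using measurable_cong_sets[OF sets_\<gamma> refl] measurable_fst measurable_snd by blast+
  have f_cont: "continuous_on X f" using lipschitz_on_continuous_on[OF lip] .
  have fP: "f \<in> borel_measurable P" and fQ: "f \<in> borel_measurable Q"
    using borel_measurable_continuous_on_sets_restrict[OF _ f_cont] P Q by auto
  have "(\<lambda>x. x) \<in> borel_measurable P" "(\<lambda>x. x) \<in> borel_measurable Q"
    using borel_measurable_continuous_on_sets_restrict[OF _ continuous_on_id] P Q by auto
  then have dist_fst_snd: "(\<lambda>z. dist (fst z) (snd z)) \<in> borel_measurable \<gamma>"
    by (intro borel_measurable_dist measurable_compose[OF fst] measurable_compose[OF snd])
  then have dist_snd_fst: "(\<lambda>z. dist (snd z) (fst z)) \<in> borel_measurable \<gamma>"
    by (simp add: dist_commute)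
  have pull_P: "(\<integral>\<^sup>+ x. ennreal (f x) \<partial>P) = (\<integral>\<^sup>+ z. ennreal (f (fst z)) \<partial>\<gamma>)"
    using nn_integral_distr[OF fst, of "\<lambda>x. ennreal (f x)"] fP distr_fst by simp
  have pull_Q: "(\<integral>\<^sup>+ x. ennreal (f x) \<partial>Q) = (\<integral>\<^sup>+ z. ennreal (f (snd z)) \<partial>\<gamma>)"
    using nn_integral_distr[OF snd, of "\<lambda>x. ennreal (f x)"] fQ distr_snd by simp
  have fst_in: "fst z \<in> X" and snd_in: "snd z \<in> X" if "z \<in> space \<gamma>" for z
    using that unfolding space_\<gamma> by auto
  have cost_fst_snd: "(\<integral>\<^sup>+ z. ennreal (dist (fst z) (snd z)) \<partial>\<gamma>)
      = (\<integral>\<^sup>+ z. ennreal (norm (fst z - snd z)) \<partial>\<gamma>)"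
    by (simp only: dist_norm)
  have cost_snd_fst: "(\<integral>\<^sup>+ z. ennreal (dist (snd z) (fst z)) \<partial>\<gamma>)
      = (\<integral>\<^sup>+ z. ennreal (norm (fst z - snd z)) \<partial>\<gamma>)"
    by (simp only: dist_commute dist_norm)
  show "(\<integral>\<^sup>+ x. ennreal (f x) \<partial>P)
      \<le> (\<integral>\<^sup>+ x. ennreal (f x) \<partial>Q) + ennreal C * (\<integral>\<^sup>+ z. ennreal (norm (fst z - snd z)) \<partial>\<gamma>)"
    unfolding pull_P pull_Q cost_fst_snd[symmetric]
    by (rule nn_integral_lipschitz_comp_le[OF lip fst_in snd_in measurable_compose[OF snd fQ] dist_fst_snd])
  show "(\<integral>\<^sup>+ x. ennreal (f x) \<partial>Q)
      \<le> (\<integral>\<^sup>+ x. ennreal (f x) \<partial>P) + ennreal C * (\<integral>\<^sup>+ z. ennreal (norm (fst z - snd z)) \<partial>\<gamma>)"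
    unfolding pull_P pull_Q cost_snd_fst[symmetric]
    by (rule nn_integral_lipschitz_comp_le[OF lip snd_in fst_in measurable_compose[OF fst fP] dist_snd_fst])
qed

lemma ennreal_abs_enn2real_diff_le:
  fixes a b c :: ennreal
  assumes ab: "a \<le> b + c" and ba: "b \<le> a + c"
  shows "ennreal \<bar>enn2real a - enn2real b\<bar> \<le> c"
proof (cases "c = \<top>")
  case False
  then obtain r where r: "c = ennreal r" "r \<ge> 0" by (cases c) auto
  show ?thesis
  proof (cases "a = \<top> \<or> b = \<top>")
    case True
    then have "a = \<top> \<and> b = \<top>" using ab ba r by (auto simp: top_unique)
    then show ?thesis by simp
  next
    case False
    then obtain x y where xy: "a = ennreal x" "x \<ge> 0" "b = ennreal y" "y \<ge> 0"
      by (cases a; cases b) auto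
    have "ennreal x \<le> ennreal (y + r)" "ennreal y \<le> ennreal (x + r)"
      using ab ba by (simp_all add: xy r)
    then have "x \<le> y + r" "y \<le> x + r"
      using xy r by (simp_all del: ennreal_plus)
    then show ?thesis by (simp add: xy r abs_le_iff)
  qed
qed simp

lemma lipschitz_integral_diff_le_wasserstein1:
  fixes f :: "'a::{second_countable_topology, real_normed_vector} \<Rightarrow> real"
  assumes C: "C > 0" and lip: "C-lipschitz_on X f" and nonneg: "\<And>x. x \<in> X \<Longrightarrow> 0 \<le> f x"
    and P: "sets P = sets (restrict_space borel X)" and Q: "sets Q = sets (restrict_space borel X)"
  shows "ennreal (\<bar>(\<integral>x. f x \<partial>P) - (\<integral>x. f x \<partial>Q)\<bar> / C) \<le> wasserstein1 P Q"
proof -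
  have integral_eq_nn: "(\<integral>x. f x \<partial>M) = enn2real (\<integral>\<^sup>+ x. ennreal (f x) \<partial>M)"
    if M: "sets M = sets (restrict_space borel X)" for M :: "'a measure"
  proof (rule integral_eq_nn_integral)
    show "f \<in> borel_measurable M"
      using borel_measurable_continuous_on_sets_restrict[OF M lipschitz_on_continuous_on[OF lip]] .
    show "AE x in M. 0 \<le> f x"
      using nonneg sets_eq_imp_space_eq[OF M] by (intro AE_I2) (simp add: space_restrict_space)
  qed
  show ?thesis
    unfolding wasserstein1_def
  proof (rule INF_greatest)
    fix \<gamma> assume \<gamma>: "\<gamma> \<in> couplings P Q"
    let ?cost = "\<integral>\<^sup>+ z. ennreal (norm (fst z - snd z)) \<partial>\<gamma>"
    have "ennreal \<bar>(\<integral>x. f x \<partial>P) - (\<integral>x. f x \<partial>Q)\<bar> \<le> ennreal C * ?cost"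
      unfolding integral_eq_nn[OF P] integral_eq_nn[OF Q]
      using coupling_nn_integral_lipschitz_le[OF \<gamma> P Q lip] by (rule ennreal_abs_enn2real_diff_le)
    then have "ennreal \<bar>(\<integral>x. f x \<partial>P) - (\<integral>x. f x \<partial>Q)\<bar> / ennreal C \<le> ennreal C * ?cost / ennreal C"
      by (rule divide_right_mono_ennreal)
    also have "ennreal C * ?cost / ennreal C = ?cost"
      using C by (subst mult.commute) (simp add: ennreal_mult_divide_eq)
    finally show "ennreal (\<bar>(\<integral>x. f x \<partial>P) - (\<integral>x. f x \<partial>Q)\<bar> / C) \<le> ?cost"
      using C by (simp add: divide_ennreal)
  qed
qed

theorem lemmaA2:
  fixes X :: "'a::euclidean_space set"
    and H :: "('a \<Rightarrow> real) set"
    and L :: real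
    and D1 D2 :: "'a measure"
  assumes L_pos: "L > 0"
    and H_lip: "\<forall>h\<in>H. L-lipschitz_on X h"
    and D1: "prob_space D1" "space D1 = X" "sets D1 = sets (restrict_space borel X)"
    and D2: "prob_space D2" "space D2 = X" "sets D2 = sets (restrict_space borel X)"
    and h1: "h1 \<in> H" and h2: "h2 \<in> H"
  shows "ennreal (1 / (2 * L) * \<bar>eps D1 h1 h2 - eps D2 h1 h2\<bar>) \<le> wasserstein1 D1 D2"
proof -
  have "(L + L)-lipschitz_on X (\<lambda>x. h1 x - h2 x)"
    using H_lip h1 h2 by (intro lipschitz_on_diff) auto
  then have lip: "(2 * L)-lipschitz_on X (\<lambda>x. \<bar>h1 x - h2 x\<bar>)"
    using lipschitz_on_norm[where f = "\<lambda>x. h1 x - h2 x"] by simp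
  have "ennreal (\<bar>eps D1 h1 h2 - eps D2 h1 h2\<bar> / (2 * L)) \<le> wasserstein1 D1 D2"
    unfolding eps_def
    by (rule lipschitz_integral_diff_le_wasserstein1[OF _ lip _ D1(3) D2(3)]) (use L_pos in auto)
  then show ?thesis by simp
qed

end
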